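(* Let $d\ge1$, consider the Gaussian broadcast model on $P=\mathbb Z_{\ge0}^{d+1}$ with $\alpha_i\in(0,1/i]$ for every $i\in\{1,\dots,d+1\}$, fix $t\ge0$ and reals $a_u$ ($u\in L_t$), not all zero, and let $\zeta=\sum_{u\in L_t}a_uX_u$. Extend $a$ to all $v\in L_m$, $0\le m\le t$, by $a_v:=\sum_{u\in L_t}p(v\to u)\,a_u$. Then (a) $\operatorname{Var}(\zeta)=a_{\mathbf 0}^2+\sum_{m=1}^t\sum_{w\in L_m}|\mathfrak p(w)|\,\alpha_{|\mathfrak p(w)|}^2\,a_w^2$; (b) $\frac1{C^2}\sum_{m=0}^t\sum_{v\in L_m}a_v^2\le\operatorname{Var}(\zeta)\le\sum_{m=0}^t\sum_{v\in L_m}a_v^2$, where $C:=\max_{i\in[d+1]}i^{-1/2}\alpha_i^{-1}$.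
   Context: Gaussian broadcast model on the finite model: $P=\mathbb{Z}_{\ge0}^{d+1}$ with $u\le v$ iff $v-u\in\mathbb{Z}_{\ge0}^{d+1}$; $L_t$ = tuples with coordinate sum $t$; $\mathfrak p(v)$ = set of elements covered by $v$ (the $v-e_i$ with $v_i>0$), so $|\mathfrak p(v)|$ is the number of positive coordinates; $\mathbf 0$ is the minimal element. Let $X_0\sim\mathcal N(0,1)$, independently i.i.d. $W_{u\to v}\sim\mathcal N(0,1)$ for covering pairs $u\lessdot v$, $X_{\mathbf 0}=X_0$, and $X_v=\alpha_{|\mathfrak p(v)|}\sum_{u\in\mathfrak p(v)}(X_u+W_{u\to v})$ for $v\ne\mathbf 0$. Path weights: each covering pair $u\lessdot v$ gives a directed edge $u\to v$ of weight $\alpha_{|\mathfrak p(v)|}$; for $u,v\in P$, $p(u\to v)$ is the sum over all directed paths (saturated chains) from $u$ to $v$ of the product of edge weights, with $p(v\to v)=1$ and $p(u\to v)=0$ if $u\not\le v$. *)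

theory Defs
  imports "HOL-Probability.Probability"
begin

text \<open>Elements of P = Z_{>=0}^{d+1} are represented as lists of naturals of length d+1.
  The partial order is coordinatewise; covering pairs are u = v - e_i with v_i > 0.\<close>

definition pos_coords :: "nat list \<Rightarrow> nat set" where
  "pos_coords v = {i. i < length v \<and> 0 < v ! i}"

definition parents :: "nat list \<Rightarrow> nat list set" where
  "parents v = (\<lambda>i. v[i := v ! i - 1]) ` pos_coords v"

definition level :: "nat \<Rightarrow> nat \<Rightarrow> nat list set" where
  "level d t = {v. length v = Suc d \<and> sum_list v = t}"

lemma parents_sum_less:
  assumes "u \<in> parents v" shows "sum_list u < sum_list v"
proof -
  obtain i where i: "i < length v" "0 < v ! i" and u: "u = v[i := v ! i - 1]"
    using assms by (auto simp: parents_def pos_coords_def)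
  have "sum_list v = sum_list (take i v) + v ! i + sum_list (drop (Suc i) v)"
    using i by (metis id_take_nth_drop sum_list.Cons sum_list_append add.assoc)
  moreover have "sum_list u = sum_list (take i v) + (v ! i - 1) + sum_list (drop (Suc i) v)"
    using i unfolding u by (simp add: upd_conv_take_nth_drop)
  ultimately show ?thesis using i by simp
qed

function Xproc :: "(nat \<Rightarrow> real) \<Rightarrow> ('a \<Rightarrow> real) \<Rightarrow> (nat list \<times> nat list \<Rightarrow> 'a \<Rightarrow> real)
    \<Rightarrow> nat list \<Rightarrow> 'a \<Rightarrow> real" where
  "Xproc \<alpha> X0 W v \<omega> =
     (if sum_list v = 0 then X0 \<omega>
      else \<alpha> (card (parents v)) * (\<Sum>u\<in>parents v. Xproc \<alpha> X0 W u \<omega> + W (u, v) \<omega>))"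
  by pat_completeness auto
termination
  by (relation "Wellfounded.measure (\<lambda>(\<alpha>, X0, W, v, \<omega>). sum_list v)") (auto intro: parents_sum_less)

declare Xproc.simps[simp del]

definition chains :: "nat list \<Rightarrow> nat list \<Rightarrow> nat list list set" where
  "chains u v = {xs. xs \<noteq> [] \<and> hd xs = u \<and> last xs = v \<and>
      (\<forall>i. Suc i < length xs \<longrightarrow> xs ! i \<in> parents (xs ! Suc i))}"

definition chain_weight :: "(nat \<Rightarrow> real) \<Rightarrow> nat list list \<Rightarrow> real" where
  "chain_weight \<alpha> xs = (\<Prod>i<length xs - 1. \<alpha> (card (parents (xs ! Suc i))))"

definition path_weight :: "(nat \<Rightarrow> real) \<Rightarrow> nat list \<Rightarrow> nat list \<Rightarrow> real" where
  "path_weight \<alpha> u v = (\<Sum>xs\<in>chains u v. chain_weight \<alpha> xs)"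

definition edges :: "nat \<Rightarrow> (nat list \<times> nat list) set" where
  "edges d = {(u, v). length v = Suc d \<and> u \<in> parents v}"

end

theory Submission
  imports Defs
begin

text \<open>Unrolling the recursion writes every \<open>X\<^sub>v\<close> as a linear combination of the independent
  standard Gaussians \<open>X\<^sub>0\<close> and \<open>W\<^sub>u\<^sub>\<rightarrow>\<^sub>w\<close>: the noise \<open>W\<^sub>u\<^sub>\<rightarrow>\<^sub>w\<close> enters \<open>X\<^sub>w\<close> with factor
  \<open>\<alpha>\<^bsub>|p(w)|\<^esub>\<close> and then propagates to \<open>X\<^sub>v\<close> with weight \<open>p(w\<rightarrow>v)\<close>, because path weights satisfy
  the same recursion as the process (split a chain at its last edge).  Hence \<open>\<zeta>\<close> has
  coefficient \<open>a\<^sub>0\<close> on \<open>X\<^sub>0\<close> and \<open>\<alpha>\<^bsub>|p(w)|\<^esub> a\<^sub>w\<close> on each of the \<open>|p(w)|\<close> edges into \<open>w\<close>, and its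
  variance is the sum of the squared coefficients.  The bounds follow from
  \<open>1/C\<^sup>2 \<le> i \<alpha>\<^sub>i\<^sup>2 \<le> 1\<close>.\<close>

section \<open>Linear combinations of independent standard normals\<close>

context prob_space
begin

lemma std_normal_distributed_integrable:
  assumes "distributed M lborel X std_normal_density"
  shows "integrable M X"
  using distributed_integrable[OF assms, of "\<lambda>x. x"] integrable_std_normal_moment[of 1]
  by simp

lemma std_normal_distributed_integrable_square:
  assumes "distributed M lborel X std_normal_density"
  shows "integrable M (\<lambda>x. (X x)\<^sup>2)"
  using distributed_integrable[OF assms, of "\<lambda>x. x\<^sup>2"] integrable_std_normal_moment[of 2]
  by simp

lemma std_normal_distributed_second_moment:
  assumes "distributed M lborel X std_normal_density"
  shows "expectation (\<lambda>x. (X x)\<^sup>2) = 1"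
  using standard_normal_distributed_variance[OF assms]
    standard_normal_distributed_expectation[OF assms] by simp

lemma indep_vars_imp_indep_var:
  assumes "indep_vars (\<lambda>_. borel) Y I" "i \<in> I" "j \<in> I" "i \<noteq> j"
  shows "indep_var borel (Y i) borel (Y j)"
proof -
  have "indep_var (PiM {i} (\<lambda>_. borel)) (\<lambda>\<omega>. restrict (\<lambda>k. Y k \<omega>) {i})
                  (PiM {j} (\<lambda>_. borel)) (\<lambda>\<omega>. restrict (\<lambda>k. Y k \<omega>) {j})"
    using assms by (intro indep_var_restrict) auto
  from indep_var_compose[OF this, of "\<lambda>f. f i" borel "\<lambda>f. f j" borel]
  show ?thesis by (simp add: comp_def)
qed

lemma expectation_indep_std_normal_product:
  assumes "indep_vars (\<lambda>_. borel) Y I" "i \<in> I" "j \<in> I"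
    and std: "\<And>i. i \<in> I \<Longrightarrow> distributed M lborel (Y i) std_normal_density"
  shows "integrable M (\<lambda>\<omega>. Y i \<omega> * Y j \<omega>)"
    and "expectation (\<lambda>\<omega>. Y i \<omega> * Y j \<omega>) = (if i = j then 1 else 0)"
proof -
  have int: "integrable M (Y k)" if "k \<in> I" for k
    using std_normal_distributed_integrable[OF std[OF that]] .
  have "integrable M (\<lambda>\<omega>. Y i \<omega> * Y j \<omega>) \<and>
        expectation (\<lambda>\<omega>. Y i \<omega> * Y j \<omega>) = (if i = j then 1 else 0)"
  proof (cases "i = j")
    case True
    have "integrable M (\<lambda>\<omega>. (Y i \<omega>)\<^sup>2)" "expectation (\<lambda>\<omega>. (Y i \<omega>)\<^sup>2) = 1"
      using std_normal_distributed_integrable_square[OF std] std_normal_distributed_second_moment[OF std]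
        assms(2) by blast+
    then show ?thesis using True by (simp add: power2_eq_square)
  next
    case False
    have ij: "indep_var borel (Y i) borel (Y j)"
      using indep_vars_imp_indep_var[OF assms(1-3) False] .
    have "expectation (Y i) = 0" "expectation (Y j) = 0"
      using standard_normal_distributed_expectation[OF std] assms(2,3) by blast+
    then show ?thesis
      using indep_var_integrable[OF ij] indep_var_lebesgue_integral[OF ij] int assms(2,3) False
      by simp
  qed
  then show "integrable M (\<lambda>\<omega>. Y i \<omega> * Y j \<omega>)"
    and "expectation (\<lambda>\<omega>. Y i \<omega> * Y j \<omega>) = (if i = j then 1 else 0)" by simp_all
qed

lemma variance_sum_indep_std_normal:
  fixes Y :: "'i \<Rightarrow> 'a \<Rightarrow> real"
  assumes "finite I" and indep: "indep_vars (\<lambda>_. borel) Y I"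
    and std: "\<And>i. i \<in> I \<Longrightarrow> distributed M lborel (Y i) std_normal_density"
  shows "variance (\<lambda>\<omega>. \<Sum>i\<in>I. b i * Y i \<omega>) = (\<Sum>i\<in>I. (b i)\<^sup>2)"
proof -
  note prod = expectation_indep_std_normal_product[OF indep _ _ std]
  have mean: "expectation (\<lambda>\<omega>. \<Sum>i\<in>I. b i * Y i \<omega>) = 0"
    using std_normal_distributed_integrable[OF std] standard_normal_distributed_expectation[OF std]
    by (simp add: Bochner_Integration.integral_sum)
  have square: "(\<lambda>\<omega>. (\<Sum>i\<in>I. b i * Y i \<omega>)\<^sup>2) =
      (\<lambda>\<omega>. \<Sum>i\<in>I. \<Sum>j\<in>I. b i * b j * (Y i \<omega> * Y j \<omega>))"
    by (auto simp: power2_eq_square sum_product algebra_simps)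
  have "expectation (\<lambda>\<omega>. (\<Sum>i\<in>I. b i * Y i \<omega>)\<^sup>2) =
      (\<Sum>i\<in>I. \<Sum>j\<in>I. b i * b j * (if i = j then 1 else 0))"
    unfolding square using prod by (simp add: Bochner_Integration.integral_sum)
  also have "\<dots> = (\<Sum>i\<in>I. (b i)\<^sup>2)"
    using \<open>finite I\<close> by (simp add: power2_eq_square if_distrib[of "(*) _"] cong: if_cong)
  finally show ?thesis unfolding variance_mean_zero[OF mean] .
qed

end

section \<open>The poset of nonnegative integer tuples\<close>

lemma length_parents: "u \<in> parents v \<Longrightarrow> length u = length v"
  by (auto simp: parents_def)

lemma sum_list_parents:
  assumes "u \<in> parents v"
  shows "Suc (sum_list u) = sum_list v"
proof -
  obtain i where i: "i < length v" "0 < v ! i" and u: "u = v[i := v ! i - 1]"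
    using assms by (auto simp: parents_def pos_coords_def)
  have "sum_list v = sum_list (take i v) + v ! i + sum_list (drop (Suc i) v)"
    using i by (metis id_take_nth_drop sum_list.Cons sum_list_append add.assoc)
  moreover have "sum_list u = sum_list (take i v) + (v ! i - 1) + sum_list (drop (Suc i) v)"
    using i unfolding u by (simp add: upd_conv_take_nth_drop)
  ultimately show ?thesis using i by simp
qed

lemma finite_parents: "finite (parents v)"
  by (auto simp: parents_def pos_coords_def)

lemma card_parents_le_length: "card (parents v) \<le> length v"
proof -
  have "card (parents v) \<le> card (pos_coords v)"
    unfolding parents_def by (rule card_image_le) (auto simp: pos_coords_def)
  also have "\<dots> \<le> card {..<length v}"
    by (rule card_mono) (auto simp: pos_coords_def)
  finally show ?thesis by simp
qed

lemma parents_nonempty: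
  assumes "0 < sum_list v"
  shows "parents v \<noteq> {}"
proof -
  obtain x where "x \<in> set v" "x \<noteq> 0"
    using assms by (metis sum_list_eq_0_iff less_irrefl)
  then obtain i where "i < length v" "0 < v ! i"
    by (metis gr0I in_set_conv_nth)
  then show ?thesis by (auto simp: parents_def pos_coords_def)
qed

lemma card_parents_in_range:
  assumes "w \<in> level d m" "1 \<le> m"
  shows "card (parents w) \<in> {1..d+1}"
proof -
  have "parents w \<noteq> {}"
    using assms parents_nonempty by (auto simp: level_def)
  then have "1 \<le> card (parents w)"
    using finite_parents by (simp add: Suc_le_eq card_gt_0_iff)
  moreover have "card (parents w) \<le> d + 1"
    using card_parents_le_length[of w] assms by (simp add: level_def)
  ultimately show ?thesis by simp
qed

lemma finite_lists_sum_list_le: "finite {w :: nat list. length w = n \<and> sum_list w \<le> T}"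
proof (rule finite_subset)
  show "{w :: nat list. length w = n \<and> sum_list w \<le> T} \<subseteq> {xs. set xs \<subseteq> {0..T} \<and> length xs = n}"
    using member_le_sum_list by fastforce
qed (simp add: finite_lists_length_eq)

lemma finite_level: "finite (level d m)"
  by (rule finite_subset[OF _ finite_lists_sum_list_le[of "Suc d" m]]) (auto simp: level_def)

lemma level_0: "level d 0 = {replicate (Suc d) 0}"
proof (intro set_eqI iffI)
  fix v assume "v \<in> level d 0"
  then have "length v = Suc d" "\<forall>x\<in>set v. x = 0" by (auto simp: level_def)
  then show "v \<in> {replicate (Suc d) 0}"
    using replicate_length_same[of v 0] by simp
qed (simp add: level_def)

section \<open>Saturated chains and path weights\<close>

lemma chains_successively:
  "chains u v = {xs. xs \<noteq> [] \<and> hd xs = u \<and> last xs = v \<and>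
      successively (\<lambda>a b. a \<in> parents b) xs}"
  by (simp add: chains_def successively_conv_nth)

lemma sum_list_last_chain:
  "successively (\<lambda>a b. a \<in> parents b) xs \<Longrightarrow> xs \<noteq> [] \<Longrightarrow>
    sum_list (last xs) = sum_list (hd xs) + (length xs - 1)"
proof (induction xs)
  case (Cons x xs)
  then show ?case
    by (cases xs) (auto simp: successively_Cons dest: sum_list_parents)
qed simp

lemma chains_refl: "chains v v = {[v]}"
proof (intro set_eqI iffI)
  fix xs assume xs: "xs \<in> chains v v"
  then have "xs \<noteq> []" "hd xs = v" "last xs = v" "successively (\<lambda>a b. a \<in> parents b) xs"
    by (auto simp: chains_successively)
  then have "length xs = 1"
    using sum_list_last_chain[of xs] by (cases xs) auto
  then show "xs \<in> {[v]}"
    using xs by (auto simp: chains_def length_Suc_conv)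
qed (simp add: chains_def)

lemma chains_eq_empty: "sum_list v < sum_list u \<Longrightarrow> chains u v = {}"
  using sum_list_last_chain by (fastforce simp: chains_successively)

lemma chains_snoc:
  assumes "u \<noteq> v"
  shows "chains u v = (\<Union>w\<in>parents v. (\<lambda>ys. ys @ [v]) ` chains u w)"
proof (intro set_eqI iffI)
  fix xs assume xs: "xs \<in> chains u v"
  then have "xs \<noteq> []" "last xs = v" "hd xs = u" by (auto simp: chains_def)
  with assms obtain ys where ys: "xs = ys @ [v]" "ys \<noteq> []"
    by (metis append_butlast_last_id append_Nil list.sel(1))
  then have "ys \<in> chains u (last ys)" "last ys \<in> parents v"
    using xs by (auto simp: chains_successively successively_append_iff)
  then show "xs \<in> (\<Union>w\<in>parents v. (\<lambda>ys. ys @ [v]) ` chains u w)"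
    using ys by blast
qed (auto simp: chains_successively successively_append_iff)

lemma finite_chains: "finite (chains u v)"
proof (induction "sum_list v" arbitrary: v rule: less_induct)
  case less
  show ?case
  proof (cases "u = v")
    case False
    have "finite (chains u w)" if "w \<in> parents v" for w
      using less sum_list_parents[OF that] by simp
    then show ?thesis
      unfolding chains_snoc[OF False] using finite_parents by blast
  qed (simp add: chains_refl)
qed

lemma chain_weight_snoc:
  assumes "ys \<noteq> []"
  shows "chain_weight \<alpha> (ys @ [v]) = chain_weight \<alpha> ys * \<alpha> (card (parents v))"
proof -
  obtain k where k: "length ys = Suc k" using assms by (cases ys) auto
  have "chain_weight \<alpha> (ys @ [v]) =
      (\<Prod>i<k. \<alpha> (card (parents ((ys @ [v]) ! Suc i)))) * \<alpha> (card (parents v))"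
    by (simp add: chain_weight_def k nth_append)
  also have "(\<Prod>i<k. \<alpha> (card (parents ((ys @ [v]) ! Suc i)))) = chain_weight \<alpha> ys"
    unfolding chain_weight_def k by (intro prod.cong) (auto simp: nth_append k)
  finally show ?thesis .
qed

lemma path_weight_refl: "path_weight \<alpha> v v = 1"
  by (simp add: path_weight_def chains_refl chain_weight_def)

lemma path_weight_eq_0: "sum_list v < sum_list u \<Longrightarrow> path_weight \<alpha> u v = 0"
  by (simp add: path_weight_def chains_eq_empty)

lemma path_weight_rec:
  assumes "u \<noteq> v"
  shows "path_weight \<alpha> u v = \<alpha> (card (parents v)) * (\<Sum>w\<in>parents v. path_weight \<alpha> u w)"
proof -
  have "path_weight \<alpha> u v =
      (\<Sum>w\<in>parents v. \<Sum>xs\<in>(\<lambda>ys. ys @ [v]) ` chains u w. chain_weight \<alpha> xs)"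
    unfolding path_weight_def chains_snoc[OF assms]
    by (rule sum.UNION_disjoint) (auto simp: finite_parents finite_chains, auto simp: chains_def)
  also have "\<dots> = (\<Sum>w\<in>parents v. \<Sum>ys\<in>chains u w. chain_weight \<alpha> ys * \<alpha> (card (parents v)))"
    by (rule sum.cong[OF refl], subst sum.reindex)
      (auto simp: inj_on_def chains_def chain_weight_snoc)
  also have "\<dots> = \<alpha> (card (parents v)) * (\<Sum>w\<in>parents v. path_weight \<alpha> u w)"
    by (simp add: path_weight_def sum_distrib_left sum_distrib_right mult.commute)
  finally show ?thesis .
qed

section \<open>The process as a linear combination of its noise variables\<close>

definition edges_upto :: "nat \<Rightarrow> nat \<Rightarrow> (nat list \<times> nat list) set" where
  "edges_upto d T = {(u, w). length w = Suc d \<and> u \<in> parents w \<and> sum_list w \<le> T}"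

definition noise_indices :: "nat \<Rightarrow> nat \<Rightarrow> (nat list \<times> nat list) option set" where
  "noise_indices d T = insert None (Some ` edges_upto d T)"

definition noise :: "('s \<Rightarrow> real) \<Rightarrow> (nat list \<times> nat list \<Rightarrow> 's \<Rightarrow> real) \<Rightarrow>
    (nat list \<times> nat list) option \<Rightarrow> 's \<Rightarrow> real" where
  "noise X0 W k = (case k of None \<Rightarrow> X0 | Some e \<Rightarrow> W e)"

definition noise_coef :: "(nat \<Rightarrow> real) \<Rightarrow> nat \<Rightarrow> nat list \<Rightarrow>
    (nat list \<times> nat list) option \<Rightarrow> real" where
  "noise_coef \<alpha> d v k = (case k of
      None \<Rightarrow> path_weight \<alpha> (replicate (Suc d) 0) v
    | Some (u, w) \<Rightarrow> \<alpha> (card (parents w)) * path_weight \<alpha> w v)"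

lemma finite_edges_upto: "finite (edges_upto d T)"
proof (rule finite_subset)
  show "edges_upto d T \<subseteq>
      (\<lambda>(w, u). (u, w)) ` (SIGMA w:{w. length w = Suc d \<and> sum_list w \<le> T}. parents w)"
    by (auto simp: edges_upto_def image_iff)
qed (intro finite_imageI finite_SigmaI finite_lists_sum_list_le finite_parents)

lemma finite_noise_indices: "finite (noise_indices d T)"
  by (simp add: noise_indices_def finite_edges_upto)

lemma noise_coef_root:
  assumes "k \<in> noise_indices d T"
  shows "noise_coef \<alpha> d (replicate (Suc d) 0) k = (if k = None then 1 else 0)"
proof (cases k)
  case (Some e)
  then obtain u w where "e = (u, w)" "u \<in> parents w"
    using assms by (auto simp: noise_indices_def edges_upto_def)
  moreover have "sum_list (replicate (Suc d) 0) < sum_list w" if "u \<in> parents w" for u w :: "nat list"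
    using sum_list_parents[OF that] by (simp add: sum_list_replicate)
  ultimately show ?thesis
    using Some by (simp add: noise_coef_def path_weight_eq_0)
qed (simp add: noise_coef_def path_weight_refl)

lemma noise_sum_root:
  "(\<Sum>k\<in>noise_indices d T. noise_coef \<alpha> d (replicate (Suc d) 0) k * noise X0 W k \<omega>) = X0 \<omega>"
proof -
  have "(\<Sum>k\<in>noise_indices d T. noise_coef \<alpha> d (replicate (Suc d) 0) k * noise X0 W k \<omega>) =
      (\<Sum>k\<in>noise_indices d T. if k = None then noise X0 W k \<omega> else 0)"
    by (intro sum.cong) (simp_all add: noise_coef_root del: replicate_Suc)
  also have "\<dots> = X0 \<omega>"
    by (simp add: finite_noise_indices) (simp add: noise_indices_def noise_def)
  finally show ?thesis .
qed

lemma noise_coef_rec: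
  assumes "0 < sum_list v" "k \<in> noise_indices d T"
  shows "noise_coef \<alpha> d v k = \<alpha> (card (parents v)) *
      ((\<Sum>u\<in>parents v. noise_coef \<alpha> d u k) + (if k \<in> (\<lambda>u. Some (u, v)) ` parents v then 1 else 0))"
proof (cases k)
  case None
  have "replicate (Suc d) 0 \<noteq> v" using assms(1) by (auto simp: sum_list_replicate)
  then show ?thesis
    using None by (auto simp: noise_coef_def path_weight_rec)
next
  case (Some e)
  obtain u' w where e: "e = (u', w)" and u': "u' \<in> parents w"
    using assms(2) Some by (auto simp: noise_indices_def edges_upto_def)
  show ?thesis
  proof (cases "w = v")
    case True
    have "path_weight \<alpha> v u = 0" if "u \<in> parents v" for u
      using path_weight_eq_0 sum_list_parents[OF that] by simp
    then show ?thesis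
      using True Some e u' by (simp add: noise_coef_def path_weight_refl)
  next
    case False
    then show ?thesis
      using Some e
      by (auto simp: noise_coef_def path_weight_rec[OF False] sum_distrib_left mult.left_commute)
  qed
qed

lemma Xproc_eq_noise_sum:
  assumes "length v = Suc d" "sum_list v \<le> T"
  shows "Xproc \<alpha> X0 W v \<omega> = (\<Sum>k\<in>noise_indices d T. noise_coef \<alpha> d v k * noise X0 W k \<omega>)"
  using assms
proof (induction "sum_list v" arbitrary: v rule: less_induct)
  case less
  let ?K = "noise_indices d T" and ?Y = "\<lambda>k. noise X0 W k \<omega>"
  show ?case
  proof (cases "sum_list v = 0")
    case True
    then have "v = replicate (Suc d) 0"
      using less.prems level_0[of d] by (auto simp: level_def)
    then show ?thesis
      by (simp add: Xproc.simps noise_sum_root del: replicate_Suc)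
  next
    case False
    define P where "P = parents v"
    define S where "S = (\<lambda>u. Some (u, v)) ` P"
    have IH: "Xproc \<alpha> X0 W u \<omega> = (\<Sum>k\<in>?K. noise_coef \<alpha> d u k * ?Y k)" if "u \<in> P" for u
      using less sum_list_parents[of u v] length_parents[of u v] that unfolding P_def by simp
    have "S \<subseteq> ?K"
      using less.prems False by (auto simp: S_def P_def noise_indices_def edges_upto_def)
    then have noise_S: "(\<Sum>k\<in>?K. (if k \<in> S then 1 else 0) * ?Y k) = (\<Sum>u\<in>P. W (u, v) \<omega>)"
      by (simp add: if_distrib[of "\<lambda>c. c * _"] sum.If_cases finite_noise_indices Int_absorb1
          S_def sum.reindex inj_on_def noise_def cong: sum.cong)
    have "(\<Sum>k\<in>?K. noise_coef \<alpha> d v k * ?Y k) =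
        (\<Sum>k\<in>?K. \<alpha> (card P) * ((\<Sum>u\<in>P. noise_coef \<alpha> d u k) + (if k \<in> S then 1 else 0)) * ?Y k)"
      using False by (intro sum.cong refl) (simp add: noise_coef_rec[of v] P_def S_def del: sum_list_eq_0_iff)
    also have "\<dots> = \<alpha> (card P) *
        ((\<Sum>k\<in>?K. (\<Sum>u\<in>P. noise_coef \<alpha> d u k) * ?Y k) + (\<Sum>k\<in>?K. (if k \<in> S then 1 else 0) * ?Y k))"
      by (simp add: algebra_simps sum.distrib sum_distrib_left sum_distrib_right)
    also have "(\<Sum>k\<in>?K. (\<Sum>u\<in>P. noise_coef \<alpha> d u k) * ?Y k) = (\<Sum>u\<in>P. Xproc \<alpha> X0 W u \<omega>)"
      by (simp add: IH sum_distrib_right sum.swap[of _ P])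
    also have "\<alpha> (card P) * ((\<Sum>u\<in>P. Xproc \<alpha> X0 W u \<omega>) + (\<Sum>k\<in>?K. (if k \<in> S then 1 else 0) * ?Y k))
        = Xproc \<alpha> X0 W v \<omega>"
      using False by (subst (2) Xproc.simps) (simp add: noise_S P_def sum.distrib del: sum_list_eq_0_iff)
    finally show ?thesis ..
  qed
qed

lemma sum_edges_upto:
  fixes g :: "nat list \<Rightarrow> real"
  shows "(\<Sum>e\<in>edges_upto d t. g (snd e)) =
    (\<Sum>m\<in>{1..t}. \<Sum>w\<in>level d m. real (card (parents w)) * g w)"
proof -
  let ?U = "\<Union>m\<in>{1..t}. level d m"
  have "1 \<le> sum_list w" if "u \<in> parents w" for u w
    using sum_list_parents[OF that] by simp
  then have edges: "edges_upto d t = (\<lambda>(w, u). (u, w)) ` (SIGMA w:?U. parents w)"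
    by (auto simp: edges_upto_def level_def image_iff)
  have "(\<Sum>e\<in>edges_upto d t. g (snd e)) = (\<Sum>x\<in>(SIGMA w:?U. parents w). g (fst x))"
    unfolding edges by (subst sum.reindex) (auto simp: inj_on_def split_beta)
  also have "\<dots> = (\<Sum>w\<in>?U. \<Sum>u\<in>parents w. g w)"
    by (subst sum.Sigma) (auto simp: finite_level finite_parents split_beta)
  also have "\<dots> = (\<Sum>m\<in>{1..t}. \<Sum>w\<in>level d m. real (card (parents w)) * g w)"
    by (simp, rule sum.UNION_disjoint) (auto simp: finite_level, auto simp: level_def)
  finally show ?thesis .
qed

lemma (in prob_space) variance_level_combination:
  fixes \<alpha> :: "nat \<Rightarrow> real" and a :: "nat list \<Rightarrow> real" and t :: nat
  assumes indep: "indep_vars (\<lambda>_. borel) (noise X0 W) (insert None (Some ` edges d))"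
    and X0_normal: "distributed M lborel X0 std_normal_density"
    and W_normal: "\<And>e. e \<in> edges d \<Longrightarrow> distributed M lborel (W e) std_normal_density"
  defines "ae \<equiv> \<lambda>v. \<Sum>u\<in>level d t. path_weight \<alpha> v u * a u"
  shows "variance (\<lambda>\<omega>. \<Sum>u\<in>level d t. a u * Xproc \<alpha> X0 W u \<omega>) =
    (ae (replicate (Suc d) 0))\<^sup>2 +
    (\<Sum>m\<in>{1..t}. \<Sum>w\<in>level d m. real (card (parents w)) * (\<alpha> (card (parents w)))\<^sup>2 * (ae w)\<^sup>2)"
proof -
  let ?K = "noise_indices d t"
  define b where "b k = (\<Sum>u\<in>level d t. a u * noise_coef \<alpha> d u k)" for k
  have "(\<Sum>u\<in>level d t. a u * Xproc \<alpha> X0 W u \<omega>) =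
      (\<Sum>u\<in>level d t. a u * (\<Sum>k\<in>?K. noise_coef \<alpha> d u k * noise X0 W k \<omega>))" for \<omega>
    by (intro sum.cong refl) (simp add: Xproc_eq_noise_sum[of _ d t] level_def)
  then have \<zeta>: "(\<Sum>u\<in>level d t. a u * Xproc \<alpha> X0 W u \<omega>) = (\<Sum>k\<in>?K. b k * noise X0 W k \<omega>)" for \<omega>
    by (simp add: b_def sum_distrib_left sum_distrib_right sum.swap[of _ "level d t"] mult.assoc)
  have indices: "?K \<subseteq> insert None (Some ` edges d)"
    by (auto simp: noise_indices_def edges_upto_def edges_def)
  have std: "distributed M lborel (noise X0 W k) std_normal_density" if "k \<in> ?K" for k
    using that X0_normal W_normal
    by (auto simp: noise_def noise_indices_def edges_upto_def edges_def)
  have "variance (\<lambda>\<omega>. \<Sum>u\<in>level d t. a u * Xproc \<alpha> X0 W u \<omega>) = (\<Sum>k\<in>?K. (b k)\<^sup>2)"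
    unfolding \<zeta>
    by (rule variance_sum_indep_std_normal[OF finite_noise_indices indep_vars_subset[OF indep indices] std])
  also have "\<dots> = (b None)\<^sup>2 + (\<Sum>e\<in>edges_upto d t. (b (Some e))\<^sup>2)"
    unfolding noise_indices_def
    by (subst sum.insert) (auto simp: finite_edges_upto sum.reindex)
  also have "(\<Sum>e\<in>edges_upto d t. (b (Some e))\<^sup>2) =
      (\<Sum>e\<in>edges_upto d t. (\<alpha> (card (parents (snd e))) * ae (snd e))\<^sup>2)"
    by (auto simp: b_def ae_def noise_coef_def sum_distrib_left mult_ac split: prod.split
        intro!: sum.cong)
  also have "\<dots> = (\<Sum>m\<in>{1..t}. \<Sum>w\<in>level d m.
      real (card (parents w)) * (\<alpha> (card (parents w)))\<^sup>2 * (ae w)\<^sup>2)"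
    using sum_edges_upto[of "\<lambda>w. (\<alpha> (card (parents w)) * ae w)\<^sup>2"]
    by (simp add: power_mult_distrib mult.assoc)
  also have "b None = ae (replicate (Suc d) 0)"
    by (simp add: b_def ae_def noise_coef_def mult.commute)
  finally show ?thesis .
qed

lemma scaled_square_le_1:
  fixes \<alpha> :: real
  assumes "1 \<le> p" "0 < \<alpha>" "\<alpha> \<le> 1 / p"
  shows "p * \<alpha>\<^sup>2 \<le> 1"
proof -
  have "p * \<alpha>\<^sup>2 \<le> p * (1 / p)\<^sup>2"
    using assms by (intro mult_left_mono power_mono) auto
  also have "\<dots> \<le> 1"
    using assms(1) by (simp add: power2_eq_square field_simps)
  finally show ?thesis .
qed

lemma inverse_square_Max_le:
  fixes \<alpha> :: "nat \<Rightarrow> real"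
  assumes "finite I" "p \<in> I" "0 < p" "\<And>i. i \<in> I \<Longrightarrow> 0 < \<alpha> i"
  defines "C \<equiv> Max ((\<lambda>i. 1 / (sqrt (real i) * \<alpha> i)) ` I)"
  shows "1 / C\<^sup>2 \<le> real p * (\<alpha> p)\<^sup>2"
proof -
  have pos: "0 < 1 / (sqrt (real p) * \<alpha> p)"
    using assms by simp
  have le: "1 / (sqrt (real p) * \<alpha> p) \<le> C"
    unfolding C_def using assms(1,2) by (intro Max_ge) auto
  then have "(1 / (sqrt (real p) * \<alpha> p))\<^sup>2 \<le> C\<^sup>2"
    using pos by (intro power_mono) auto
  moreover have "0 < C" using pos le by linarith
  ultimately have "1 / C\<^sup>2 \<le> 1 / (1 / (sqrt (real p) * \<alpha> p))\<^sup>2"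
    using pos assms(3) by (intro divide_left_mono mult_pos_pos) auto
  also have "1 / (1 / (sqrt (real p) * \<alpha> p))\<^sup>2 = real p * (\<alpha> p)\<^sup>2"
    by (simp add: power_mult_distrib power_divide)
  finally show ?thesis .
qed

lemma level_sums_bounds:
  fixes f \<kappa> :: "nat list \<Rightarrow> real"
  assumes "c \<le> 1" and \<kappa>: "\<And>m w. m \<in> {1..t} \<Longrightarrow> w \<in> level d m \<Longrightarrow> c \<le> \<kappa> w \<and> \<kappa> w \<le> 1"
  defines "V \<equiv> (f (replicate (Suc d) 0))\<^sup>2 + (\<Sum>m\<in>{1..t}. \<Sum>w\<in>level d m. \<kappa> w * (f w)\<^sup>2)"
  shows "c * (\<Sum>m\<in>{0..t}. \<Sum>v\<in>level d m. (f v)\<^sup>2) \<le> V"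
    and "V \<le> (\<Sum>m\<in>{0..t}. \<Sum>v\<in>level d m. (f v)\<^sup>2)"
proof -
  have split: "(\<Sum>m\<in>{0..t}. \<Sum>v\<in>level d m. (f v)\<^sup>2) =
      (f (replicate (Suc d) 0))\<^sup>2 + (\<Sum>m\<in>{1..t}. \<Sum>v\<in>level d m. (f v)\<^sup>2)"
    by (subst sum.atLeast_Suc_atMost) (simp_all add: level_0)
  have le: "x * (f v)\<^sup>2 \<le> (f v)\<^sup>2" if "x \<le> 1" for x v
    using mult_right_mono[OF that, of "(f v)\<^sup>2"] by simp
  show "c * (\<Sum>m\<in>{0..t}. \<Sum>v\<in>level d m. (f v)\<^sup>2) \<le> V"
    unfolding split V_def distrib_left sum_distrib_left
    using \<kappa> le[OF \<open>c \<le> 1\<close>] by (intro add_mono sum_mono mult_right_mono) auto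
  show "V \<le> (\<Sum>m\<in>{0..t}. \<Sum>v\<in>level d m. (f v)\<^sup>2)"
    unfolding split V_def using \<kappa> le by (intro add_mono sum_mono) auto
qed

theorem mainTheorem7:
  fixes M :: "'s measure" and X0 :: "'s \<Rightarrow> real"
    and W :: "nat list \<times> nat list \<Rightarrow> 's \<Rightarrow> real"
    and \<alpha> :: "nat \<Rightarrow> real" and d t :: nat and a :: "nat list \<Rightarrow> real"
  assumes "prob_space M"
    and "d \<ge> 1"
    and alpha: "\<And>i. i \<in> {1..d+1} \<Longrightarrow> 0 < \<alpha> i \<and> \<alpha> i \<le> 1 / real i"
    and indep: "prob_space.indep_vars M (\<lambda>_. borel)
                  (\<lambda>k. case k of None \<Rightarrow> X0 | Some e \<Rightarrow> W e) (insert None (Some ` edges d))"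
    and X0_normal: "distributed M lborel X0 std_normal_density"
    and W_normal: "\<And>e. e \<in> edges d \<Longrightarrow> distributed M lborel (W e) std_normal_density"
    and nonzero: "\<exists>u\<in>level d t. a u \<noteq> 0"
  defines "\<zeta> \<equiv> (\<lambda>\<omega>. \<Sum>u\<in>level d t. a u * Xproc \<alpha> X0 W u \<omega>)"
    and "ae \<equiv> (\<lambda>v. \<Sum>u\<in>level d t. path_weight \<alpha> v u * a u)"
    and "C \<equiv> Max ((\<lambda>i. 1 / (sqrt (real i) * \<alpha> i)) ` {1..d+1})"
  shows "prob_space.variance M \<zeta> =
           (ae (replicate (d+1) 0))\<^sup>2 +
           (\<Sum>m\<in>{1..t}. \<Sum>w\<in>level d m.
              real (card (parents w)) * (\<alpha> (card (parents w)))\<^sup>2 * (ae w)\<^sup>2) \<and>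
         1 / C\<^sup>2 * (\<Sum>m\<in>{0..t}. \<Sum>v\<in>level d m. (ae v)\<^sup>2) \<le> prob_space.variance M \<zeta> \<and>
         prob_space.variance M \<zeta> \<le> (\<Sum>m\<in>{0..t}. \<Sum>v\<in>level d m. (ae v)\<^sup>2)"
proof -
  interpret prob_space M by fact
  define \<kappa> where "\<kappa> w = real (card (parents w)) * (\<alpha> (card (parents w)))\<^sup>2" for w
  have "indep_vars (\<lambda>_. borel) (noise X0 W) (insert None (Some ` edges d))"
    using indep unfolding noise_def[abs_def] .
  from variance_level_combination[OF this X0_normal W_normal]
  have variance: "variance \<zeta> = (ae (replicate (d+1) 0))\<^sup>2 +
      (\<Sum>m\<in>{1..t}. \<Sum>w\<in>level d m. \<kappa> w * (ae w)\<^sup>2)"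
    by (simp add: \<zeta>_def ae_def \<kappa>_def)
  have weight_bounds: "1 / C\<^sup>2 \<le> real p * (\<alpha> p)\<^sup>2 \<and> real p * (\<alpha> p)\<^sup>2 \<le> 1" if "p \<in> {1..d+1}" for p
    using that alpha inverse_square_Max_le[of "{1..d+1}" p \<alpha>] scaled_square_le_1[of "real p" "\<alpha> p"]
    unfolding C_def by auto
  have "1 / C\<^sup>2 \<le> 1"
    using weight_bounds[of 1] by simp
  moreover have "1 / C\<^sup>2 \<le> \<kappa> w \<and> \<kappa> w \<le> 1" if "m \<in> {1..t}" "w \<in> level d m" for m w
    using weight_bounds card_parents_in_range that unfolding \<kappa>_def by auto
  ultimately show ?thesis
    using level_sums_bounds[of "1 / C\<^sup>2" t d \<kappa> ae] variance by (simp add: \<kappa>_def)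
qed

end
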